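(* Let $\alpha>0$, $\beta\in\mathbb{R}$, $\gamma>0$, $d\ge1$, $c\in\mathbb{R}$, write $x=\alpha(z-\beta)$, and let $$Q(z)=\frac{\operatorname{sign}(x)}{d+1}|x|^{d+1}+c\,x,\qquad q(z)=Q'(z)=\alpha\big[|x|^d+c\big],\qquad p(z)=\frac{1}{1+e^{-Q(z)/\gamma}}.$$ Let $H(z)=\gamma\log(1+e^{Q(z)/\gamma})$ and $\mathcal{L}_m(\hat s,s)=H(\hat s)-H(s)-(\hat s-s)H'(s)$. If $c\ge\max\{\sqrt{2\gamma d},\,\gamma d-\tfrac12\}$, then $\mathcal{L}_m(\hat s,s)$ is convex in $\hat s\in\mathbb{R}$ for every $s\in\mathbb{R}$ (i.e. a convex selective matching loss with this scaling exists).
   Context: $H$ is the $\gamma$-regularized composite Softplus primitive, with link $H'(z)=q(z)p(z)$. *)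

theory Defs
  imports "HOL-Analysis.Analysis"
begin

definition Qf :: "real \<Rightarrow> real \<Rightarrow> real \<Rightarrow> real \<Rightarrow> real \<Rightarrow> real" where
  "Qf al be d c z = (let x = al * (z - be) in
     sgn x / (d + 1) * \<bar>x\<bar> powr (d + 1) + c * x)"

definition qf :: "real \<Rightarrow> real \<Rightarrow> real \<Rightarrow> real \<Rightarrow> real \<Rightarrow> real" where
  "qf al be d c z = al * (\<bar>al * (z - be)\<bar> powr d + c)"

definition pf :: "real \<Rightarrow> real \<Rightarrow> real \<Rightarrow> real \<Rightarrow> real \<Rightarrow> real \<Rightarrow> real" where
  "pf al be ga d c z = 1 / (1 + exp (- Qf al be d c z / ga))"

definition Hf :: "real \<Rightarrow> real \<Rightarrow> real \<Rightarrow> real \<Rightarrow> real \<Rightarrow> real \<Rightarrow> real" where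
  "Hf al be ga d c z = ga * ln (1 + exp (Qf al be d c z / ga))"

text \<open>Matching loss, with the link H'(s) = q(s) p(s).\<close>
definition Lm :: "real \<Rightarrow> real \<Rightarrow> real \<Rightarrow> real \<Rightarrow> real \<Rightarrow> real \<Rightarrow> real \<Rightarrow> real" where
  "Lm al be ga d c sh s = Hf al be ga d c sh - Hf al be ga d c s
      - (sh - s) * (qf al be d c s * pf al be ga d c s)"

end

theory Submission
  imports Defs
begin

(* Since H' = q p everywhere, L_m(., s) is H minus an affine function, so it is convex as soon as
   the link q p is nondecreasing.  Away from z = beta the link has derivative
   p (q' + (1 - p) q^2 / gamma).  For z > beta every term is nonnegative.  For z < beta we have
   Q <= 0, hence 1 - p >= 1/2, and the negative term q' = -alpha^2 d t^(d-1), t = |x|, is dominated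
   since 2 gamma d t^(d-1) <= (t^d + c)^2; this is where the bound on c enters, through
   c^2 >= 2 gamma d and c >= gamma d / 2. *)

lemma max_sqrt_threshold_bounds:
  fixes k c :: real
  assumes "k \<ge> 0" and "c \<ge> max (sqrt (2 * k)) (k - 1 / 2)"
  shows "0 \<le> c" and "2 * k \<le> c\<^sup>2" and "k \<le> 2 * c"
proof -
  have c_sqrt: "sqrt (2 * k) \<le> c" using assms(2) by simp
  moreover have sqrt_nonneg: "0 \<le> sqrt (2 * k)" using assms(1) by simp
  ultimately show "0 \<le> c" by linarith
  have "(sqrt (2 * k))\<^sup>2 \<le> c\<^sup>2" using c_sqrt sqrt_nonneg by (rule power_mono)
  then show "2 * k \<le> c\<^sup>2" using assms(1) by simp
  show "k \<le> 2 * c"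
  proof (cases "k \<le> 8")
    case True
    have "(k / 2)\<^sup>2 \<le> 2 * k" using True assms(1) by (simp add: power2_eq_square mult_right_mono)
    then have "k / 2 \<le> sqrt (2 * k)" by (rule real_le_rsqrt)
    then show ?thesis using c_sqrt by linarith
  next
    case False
    then show ?thesis using assms(2) by simp
  qed
qed

lemma powr_diff_one_le_square:
  fixes k c d t :: real
  assumes "d \<ge> 1" "t \<ge> 0" "0 \<le> k" "0 \<le> c" "2 * k \<le> c\<^sup>2" "k \<le> 2 * c"
  shows "2 * k * t powr (d - 1) \<le> (t powr d + c)\<^sup>2"
proof (cases "t \<le> 1")
  case True
  have "t powr (d - 1) \<le> 1" using True assms by (intro powr_le1) auto
  then have "2 * k * t powr (d - 1) \<le> 2 * k" using assms by (simp add: mult_left_le)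
  also have "\<dots> \<le> c\<^sup>2" using assms by simp
  also have "\<dots> \<le> (t powr d + c)\<^sup>2" using assms by (intro power_mono) auto
  finally show ?thesis .
next
  case False
  have "t powr (d - 1) \<le> t powr d" using False by (intro powr_mono) auto
  then have "2 * k * t powr (d - 1) \<le> 2 * k * t powr d" using assms by (intro mult_left_mono) auto
  also have "\<dots> \<le> 4 * c * t powr d" using assms by (intro mult_right_mono) auto
  also have "\<dots> \<le> (t powr d + c)\<^sup>2" using zero_le_power2[of "t powr d - c"]
    by (simp add: power2_eq_square algebra_simps)
  finally show ?thesis .
qed

lemma has_real_derivative_abs_powr:
  fixes d x :: real
  assumes "x \<noteq> 0"
  shows "((\<lambda>y. \<bar>y\<bar> powr d) has_real_derivative d * sgn x * \<bar>x\<bar> powr (d - 1)) (at x)"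
proof (cases "x > 0")
  case True
  have "((\<lambda>y. y powr d) has_real_derivative d * sgn x * \<bar>x\<bar> powr (d - 1)) (at x)"
    using has_real_derivative_powr[OF True, of d] True by simp
  then show ?thesis
    by (rule has_field_derivative_transform_within_open[where S = "{0<..}"]) (use True in auto)
next
  case False
  with assms have neg: "0 < - x" by simp
  have "((\<lambda>y. (- y) powr d) has_real_derivative d * sgn x * \<bar>x\<bar> powr (d - 1)) (at x)"
    using DERIV_chain2[OF has_real_derivative_powr[OF neg, of d] DERIV_minus[OF DERIV_ident]] neg
    by simp
  then show ?thesis
    by (rule has_field_derivative_transform_within_open[where S = "{..<0}"]) (use neg in auto)
qed

lemma has_real_derivative_signed_powr:
  fixes d x :: real
  assumes "d > 0"
  shows "((\<lambda>y. y * \<bar>y\<bar> powr d) has_real_derivative (d + 1) * \<bar>x\<bar> powr d) (at x)"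
proof (cases "x = 0")
  case False
  have "sgn x * x * \<bar>x\<bar> powr (d - 1) = \<bar>x\<bar> powr d"
    using False by (simp add: powr_diff sgn_if)
  then show ?thesis
    using DERIV_mult[OF DERIV_ident has_real_derivative_abs_powr[OF False, of d]]
    by (simp add: algebra_simps)
next
  case True
  have "((\<lambda>y. \<bar>y\<bar> powr d) \<longlongrightarrow> \<bar>0\<bar> powr d) (at (0::real))"
    by (intro tendsto_powr' tendsto_intros) (use assms in auto)
  then have "((\<lambda>y. \<bar>y\<bar> powr d) \<longlongrightarrow> 0) (at (0::real))" by simp
  then have "((\<lambda>y. (y * \<bar>y\<bar> powr d - 0 * \<bar>0\<bar> powr d) / (y - 0)) \<longlongrightarrow> 0) (at (0::real))"
    by (rule Lim_transform_eventually) (auto simp: eventually_at_filter)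
  then show ?thesis using True assms by (simp add: has_field_derivative_iff)
qed

lemma DERIV_nonneg_off_point_imp_mono:
  fixes f :: "real \<Rightarrow> real" and p :: real
  assumes cont: "continuous_on UNIV f"
    and deriv: "\<And>x. x \<noteq> p \<Longrightarrow> \<exists>y. DERIV f x :> y \<and> 0 \<le> y"
  shows "mono f"
proof (rule monoI)
  have avoid: "f a \<le> f b" if "a \<le> b" "p \<notin> {a<..<b}" for a b
    using that by (intro DERIV_nonneg_imp_increasing_open[OF \<open>a \<le> b\<close>] deriv
        continuous_on_subset[OF cont]) auto
  fix a b :: real
  assume "a \<le> b"
  show "f a \<le> f b"
  proof (cases "p \<in> {a<..<b}")
    case True
    then have "f a \<le> f p" "f p \<le> f b" by (auto intro!: avoid)
    then show ?thesis by linarith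
  qed (use avoid \<open>a \<le> b\<close> in auto)
qed

locale softplus_link =
  fixes al be ga d c :: real
  assumes d_pos: "d > 0" and ga_pos: "ga > 0"
begin

abbreviation "Q \<equiv> Qf al be d c"
abbreviation "q \<equiv> qf al be d c"
abbreviation "p \<equiv> pf al be ga d c"
abbreviation "H \<equiv> Hf al be ga d c"
abbreviation link :: "real \<Rightarrow> real" where "link z \<equiv> q z * p z"
abbreviation q' :: "real \<Rightarrow> real" where
  "q' z \<equiv> al\<^sup>2 * d * sgn (al * (z - be)) * \<bar>al * (z - be)\<bar> powr (d - 1)"

lemma Q_eq: "Q z = al * (z - be) * \<bar>al * (z - be)\<bar> powr d / (d + 1) + c * (al * (z - be))"
proof -
  have "sgn x * \<bar>x\<bar> powr (d + 1) = x * \<bar>x\<bar> powr d" for x :: real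
    by (cases "x = 0") (simp_all add: powr_add sgn_if)
  then show ?thesis unfolding Qf_def Let_def by simp
qed

lemma Q_has_real_derivative: "(Q has_real_derivative q z) (at z)"
proof -
  have lin: "((\<lambda>z. al * (z - be)) has_real_derivative al) (at z)"
    by (auto intro!: derivative_eq_intros)
  have "((\<lambda>z. al * (z - be) * \<bar>al * (z - be)\<bar> powr d / (d + 1) + c * (al * (z - be)))
      has_real_derivative (d + 1) * \<bar>al * (z - be)\<bar> powr d * al / (d + 1) + c * al) (at z)"
    by (intro DERIV_add DERIV_cdivide DERIV_cmult lin
        DERIV_chain2[OF has_real_derivative_signed_powr[OF d_pos] lin])
  moreover have "(d + 1) * \<bar>al * (z - be)\<bar> powr d * al / (d + 1) + c * al = q z"
    using d_pos by (simp add: qf_def field_simps)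
  ultimately show ?thesis by (simp add: Q_eq[abs_def])
qed

lemma q_has_real_derivative:
  assumes "al * (z - be) \<noteq> 0"
  shows "(q has_real_derivative q' z) (at z)"
proof -
  have "((\<lambda>z. al * (z - be)) has_real_derivative al) (at z)"
    by (auto intro!: derivative_eq_intros)
  from DERIV_chain2[OF has_real_derivative_abs_powr[OF assms] this]
  have "((\<lambda>z. al * (\<bar>al * (z - be)\<bar> powr d + c)) has_real_derivative
      al * (d * sgn (al * (z - be)) * \<bar>al * (z - be)\<bar> powr (d - 1) * al + 0)) (at z)"
    by (intro DERIV_cmult DERIV_add DERIV_const)
  then show ?thesis by (simp add: qf_def[abs_def] power2_eq_square algebra_simps)
qed

lemma p_has_real_derivative: "(p has_real_derivative p z * (1 - p z) * q z / ga) (at z)"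
proof -
  define e where "e = exp (- Q z / ga)"
  have e_pos: "e > 0" unfolding e_def by simp
  then have denom_nonzero: "1 + e \<noteq> 0" by simp
  have "((\<lambda>z. - Q z / ga) has_real_derivative - q z / ga) (at z)"
    by (intro DERIV_cdivide DERIV_minus Q_has_real_derivative)
  from DERIV_add[OF DERIV_const DERIV_chain2[OF DERIV_exp this]]
  have "((\<lambda>z. 1 + exp (- Q z / ga)) has_real_derivative e * (- q z / ga)) (at z)"
    by (simp add: e_def)
  from DERIV_inverse_fun[OF this denom_nonzero[unfolded e_def]]
  have "((\<lambda>z. inverse (1 + exp (- Q z / ga))) has_real_derivative
      - (e * (- q z / ga) * inverse ((1 + e)\<^sup>2))) (at z)"
    by (simp add: e_def power2_eq_square)
  moreover have "- (e * (- q z / ga) * inverse ((1 + e)\<^sup>2)) = p z * (1 - p z) * q z / ga"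
    using e_pos unfolding pf_def e_def[symmetric] by (simp add: field_simps power2_eq_square)
  ultimately show ?thesis by (simp add: pf_def[abs_def] inverse_eq_divide)
qed

lemma H_has_real_derivative: "(H has_real_derivative link z) (at z)"
proof -
  define e where "e = exp (Q z / ga)"
  have e_pos: "e > 0" unfolding e_def by simp
  have "((\<lambda>z. Q z / ga) has_real_derivative q z / ga) (at z)"
    by (intro DERIV_cdivide Q_has_real_derivative)
  from DERIV_add[OF DERIV_const DERIV_chain2[OF DERIV_exp this]]
  have "((\<lambda>z. 1 + exp (Q z / ga)) has_real_derivative e * (q z / ga)) (at z)"
    by (simp add: e_def)
  moreover have "0 < 1 + exp (Q z / ga)" by (simp add: add_pos_pos)
  ultimately have "((\<lambda>z. ga * ln (1 + exp (Q z / ga))) has_real_derivative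
      ga * (1 / (1 + e) * (e * (q z / ga)))) (at z)"
    unfolding e_def by (intro DERIV_cmult DERIV_chain2[OF DERIV_ln_divide])
  moreover have "ga * (1 / (1 + e) * (e * (q z / ga))) = link z"
  proof -
    have "exp (- Q z / ga) = 1 / e" by (simp add: e_def exp_minus inverse_eq_divide)
    then have "p z = 1 / (1 + 1 / e)" unfolding pf_def by simp
    also have "\<dots> = e / (1 + e)" using e_pos by (simp add: field_simps)
    finally have "p z = e / (1 + e)" .
    then show ?thesis using ga_pos by simp
  qed
  ultimately show ?thesis by (simp add: Hf_def[abs_def])
qed

lemma link_has_real_derivative:
  assumes "al * (z - be) \<noteq> 0"
  shows "(link has_real_derivative p z * (q' z + (1 - p z) * (q z)\<^sup>2 / ga)) (at z)"
  using DERIV_mult[OF q_has_real_derivative[OF assms] p_has_real_derivative]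
  by (simp add: power2_eq_square algebra_simps)

lemma p_bounds: "0 < p z" "p z < 1"
  unfolding pf_def by (simp_all add: add_pos_pos)

lemma Q_nonpos:
  assumes "al \<ge> 0" "c \<ge> 0" "z \<le> be"
  shows "Q z \<le> 0"
proof -
  have "al * (z - be) \<le> 0" using assms by (simp add: mult_nonneg_nonpos)
  then show ?thesis
    unfolding Q_eq using assms d_pos
    by (intro add_nonpos_nonpos divide_nonpos_pos mult_nonpos_nonneg mult_nonneg_nonpos) auto
qed

lemma p_le_half:
  assumes "Q z \<le> 0"
  shows "p z \<le> 1 / 2"
proof -
  have "1 \<le> exp (- Q z / ga)" using assms ga_pos by (simp add: divide_nonpos_pos)
  then show ?thesis unfolding pf_def by (intro divide_left_mono) (auto intro: add_pos_pos)
qed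

lemma continuous_on_link: "continuous_on UNIV link"
proof -
  have "continuous_on UNIV q"
    unfolding qf_def[abs_def] using d_pos
    by (intro continuous_intros continuous_on_powr') auto
  moreover have "continuous_on UNIV p"
    using DERIV_isCont[OF p_has_real_derivative] by (simp add: continuous_at_imp_continuous_on)
  ultimately show ?thesis by (intro continuous_intros)
qed

context
  assumes al_pos: "al > 0" and d_ge_1: "d \<ge> 1" and c_nonneg: "0 \<le> c"
    and c_square: "2 * (ga * d) \<le> c\<^sup>2" and c_linear: "ga * d \<le> 2 * c"
begin

lemma link_derivative_nonneg:
  assumes "z \<noteq> be"
  shows "0 \<le> p z * (q' z + (1 - p z) * (q z)\<^sup>2 / ga)"
proof -
  define t where "t = \<bar>al * (z - be)\<bar>"
  have q_eq: "q z = al * (t powr d + c)" unfolding qf_def t_def ..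
  have tail_nonneg: "0 \<le> (1 - p z) * (q z)\<^sup>2 / ga"
    using p_bounds[of z] ga_pos by simp
  have "0 \<le> al\<^sup>2 * d * sgn (al * (z - be)) * t powr (d - 1) + (1 - p z) * (q z)\<^sup>2 / ga"
  proof (cases "z < be")
    case True
    have "2 * (ga * d) * t powr (d - 1) \<le> (t powr d + c)\<^sup>2"
      using d_ge_1 ga_pos c_nonneg c_square c_linear unfolding t_def
      by (intro powr_diff_one_le_square) auto
    then have "al\<^sup>2 * (2 * (ga * d) * t powr (d - 1)) \<le> al\<^sup>2 * (t powr d + c)\<^sup>2"
      by (rule mult_left_mono) simp
    then have "al\<^sup>2 * d * t powr (d - 1) \<le> 1 / 2 * (q z)\<^sup>2 / ga"
      using ga_pos unfolding q_eq power_mult_distrib by (simp add: field_simps)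
    also have "\<dots> \<le> (1 - p z) * (q z)\<^sup>2 / ga"
      using p_le_half[OF Q_nonpos] True al_pos c_nonneg ga_pos
      by (intro divide_right_mono mult_right_mono) auto
    finally show ?thesis using True al_pos by (simp add: sgn_mult)
  next
    case False
    then show ?thesis using assms al_pos d_ge_1 tail_nonneg by (simp add: sgn_mult)
  qed
  then show ?thesis using p_bounds[of z] unfolding t_def by simp
qed

lemma mono_link: "mono link"
proof (rule DERIV_nonneg_off_point_imp_mono[OF continuous_on_link])
  fix z assume "z \<noteq> be"
  then show "\<exists>y. DERIV link z :> y \<and> 0 \<le> y"
    using al_pos link_has_real_derivative link_derivative_nonneg by auto
qed

lemma convex_on_Lm: "convex_on UNIV (\<lambda>sh. Lm al be ga d c sh s)"
proof (rule convex_on_realI[where f' = "\<lambda>sh. link sh - link s"])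
  fix sh :: real
  have "((\<lambda>sh. (sh - s) * link s) has_real_derivative link s) (at sh)"
    by (auto intro!: derivative_eq_intros)
  from DERIV_diff[OF DERIV_diff[OF H_has_real_derivative DERIV_const] this]
  show "((\<lambda>sh. Lm al be ga d c sh s) has_real_derivative link sh - link s) (at sh)"
    unfolding Lm_def by simp
next
  fix x y :: real
  assume "x \<le> y"
  with mono_link show "link x - link s \<le> link y - link s"
    by (auto dest: monoD)
qed simp

end

end

theorem corollaryG5:
  fixes al be ga d c :: real
  assumes "al > 0" and "ga > 0" and "d \<ge> 1"
    and "c \<ge> max (sqrt (2 * ga * d)) (ga * d - 1 / 2)"
  shows "\<forall>s. convex_on UNIV (\<lambda>sh. Lm al be ga d c sh s)"
proof
  fix s
  interpret softplus_link al be ga d c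
    using assms by unfold_locales auto
  have "0 \<le> ga * d" using assms by simp
  from max_sqrt_threshold_bounds[OF this] assms(4)
  have "0 \<le> c" "2 * (ga * d) \<le> c\<^sup>2" "ga * d \<le> 2 * c"
    by (simp_all add: mult.assoc)
  with assms show "convex_on UNIV (\<lambda>sh. Lm al be ga d c sh s)"
    by (intro convex_on_Lm)
qed

end
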